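(* Let $u$ be a law invariant coherent utility on $L^0$ with determining set $\mathcal{D}$ that is finite on Gaussian random variables. Let $F=(F^1,\dots,F^M)$ be a random vector with $F^m\in L^1_w(\mathcal{D})$ for all $m$, and assume $u(\langle b,F\rangle)<0$ for every $b\in\mathbb{R}^M\setminus\{0\}$. For $n\in\mathbb{N}$ let $$X_n=B_nF+\xi_n,$$ where $B_n$ is a real $n\times M$ matrix with entries $B_n^{km}$, and $\xi_n=(\xi_n^1,\dots,\xi_n^n)$ where $\xi_n^1,\dots,\xi_n^n,F$ are independent and $\xi_n^k$ is Gaussian with mean $0$ and variance $(\sigma_n^k)^2$; write $X_n=(X_n^1,\dots,X_n^n)$. Assume there exist a sequence $a_n\to\infty$ and $b=(b^1,\dots,b^M)\ne0$ such that $$a_n^{-1}\sum_{k=1}^nB_n^{km}\xrightarrow[n\to\infty]{}b^m,\quad m=1,\dots,M,\qquad a_n^{-2}\sum_{k=1}^n(\sigma_n^k)^2\xrightarrow[n\to\infty]{}0.$$ Then $$\frac{u^f\big(\sum_{k=1}^nX_n^k;F\big)}{u\big(\sum_{k=1}^nX_n^k\big)}\xrightarrow[n\to\infty]{}1.$$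
   Context: Let $(\Omega,\mathcal{F},\mathsf{P})$ be a probability space, $L^0$ the space of all real random variables, and $\mathcal{P}$ the set of probability measures on $\mathcal{F}$ absolutely continuous with respect to $\mathsf{P}$; measures $\mathsf{Q}\in\mathcal{P}$ are identified with their densities. For $\mathsf{Q}\in\mathcal{P}$ and $X\in L^0$, $\mathsf{E}_\mathsf{Q}X:=\mathsf{E}_\mathsf{Q}X^+-\mathsf{E}_\mathsf{Q}X^-$ with the convention $\infty-\infty=-\infty$. A coherent utility on $L^0$ is a map $u:L^0\to[-\infty,\infty]$ of the form $u(X)=\inf_{\mathsf{Q}\in\mathcal{D}}\mathsf{E}_\mathsf{Q}X$ for a nonempty $\mathcal{D}\subseteq\mathcal{P}$; its determining set is the largest such set, $\{\mathsf{Q}\in\mathcal{P}:\mathsf{E}_\mathsf{Q}X\ge u(X)\ \forall X\in L^0\}$. $u$ is law invariant if $u(X)=u(X')$ whenever $X,X'$ have the same distribution. $L^1_w(\mathcal{D})=\{X\in L^0:u(X)>-\infty,\ u(-X)>-\infty\}$. For a random vector $Y$, $\mathsf{E}(\mathcal{D}\mid Y):=\{\mathsf{E}(Z\mid Y):Z\in\mathcal{D}\}$ and the factor utility is $u^f(X;Y):=\inf_{\mathsf{Q}\in\mathsf{E}(\mathcal{D}\mid Y)}\mathsf{E}_\mathsf{Q}X$. *)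

theory Defs
  imports "HOL-Probability.Probability"
begin

text \<open>Densities of probability measures absolutely continuous w.r.t. the base measure M
  (the set \<open>\<P>\<close> of the paper, measures identified with their densities).\<close>
definition dens :: "'a measure \<Rightarrow> ('a \<Rightarrow> real) set" where
  "dens M = {Z. Z \<in> borel_measurable M \<and> (\<forall>\<omega>\<in>space M. 0 \<le> Z \<omega>)
                 \<and> integrable M Z \<and> integral\<^sup>L M Z = 1}"

text \<open>\<open>E_Q X = E_Q X^+ - E_Q X^-\<close>, with the convention \<open>\<infinity> - \<infinity> = -\<infinity>\<close>; Q given by density Z.\<close>
definition EQ :: "'a measure \<Rightarrow> ('a \<Rightarrow> real) \<Rightarrow> ('a \<Rightarrow> real) \<Rightarrow> ereal" where
  "EQ M Z X =
     (let p = (\<integral>\<^sup>+\<omega>. ennreal (Z \<omega> * max (X \<omega>) 0) \<partial>M);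
          n = (\<integral>\<^sup>+\<omega>. ennreal (Z \<omega> * max (- X \<omega>) 0) \<partial>M)
      in if n = \<top> then -\<infinity> else enn2ereal p - enn2ereal n)"

text \<open>Coherent utility on \<open>L^0\<close> (only its values on measurable X matter).\<close>
definition coherent_utility :: "'a measure \<Rightarrow> (('a \<Rightarrow> real) \<Rightarrow> ereal) \<Rightarrow> bool" where
  "coherent_utility M u \<longleftrightarrow>
     (\<exists>D. D \<noteq> {} \<and> D \<subseteq> dens M \<and>
        (\<forall>X\<in>borel_measurable M. u X = (INF Z\<in>D. EQ M Z X)))"

text \<open>Determining set: the largest representing set.\<close>
definition determining_set :: "'a measure \<Rightarrow> (('a \<Rightarrow> real) \<Rightarrow> ereal) \<Rightarrow> ('a \<Rightarrow> real) set" where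
  "determining_set M u = {Z \<in> dens M. \<forall>X\<in>borel_measurable M. u X \<le> EQ M Z X}"

definition law_invariant :: "'a measure \<Rightarrow> (('a \<Rightarrow> real) \<Rightarrow> ereal) \<Rightarrow> bool" where
  "law_invariant M u \<longleftrightarrow>
     (\<forall>X\<in>borel_measurable M. \<forall>X'\<in>borel_measurable M.
        distr M borel X = distr M borel X' \<longrightarrow> u X = u X')"

text \<open>X is Gaussian with mean \<open>\<mu>\<close> and variance \<open>v \<ge> 0\<close> (v = 0: degenerate, X = \<open>\<mu>\<close> a.s.).\<close>
definition gaussian :: "'a measure \<Rightarrow> ('a \<Rightarrow> real) \<Rightarrow> real \<Rightarrow> real \<Rightarrow> bool" where
  "gaussian M X \<mu> v \<longleftrightarrow> 0 \<le> v \<and> X \<in> borel_measurable M \<and>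
     (if v = 0 then distr M borel X = return borel \<mu>
      else distributed M lborel X (normal_density \<mu> (sqrt v)))"

definition finite_on_gaussians :: "'a measure \<Rightarrow> (('a \<Rightarrow> real) \<Rightarrow> ereal) \<Rightarrow> bool" where
  "finite_on_gaussians M u \<longleftrightarrow> (\<forall>X \<mu> v. gaussian M X \<mu> v \<longrightarrow> \<bar>u X\<bar> \<noteq> \<infinity>)"

definition L1w :: "'a measure \<Rightarrow> (('a \<Rightarrow> real) \<Rightarrow> ereal) \<Rightarrow> ('a \<Rightarrow> real) set" where
  "L1w M u = {X \<in> borel_measurable M. u X > -\<infinity> \<and> u (\<lambda>\<omega>. - X \<omega>) > -\<infinity>}"

definition factor_utility ::
    "'a measure \<Rightarrow> (('a \<Rightarrow> real) \<Rightarrow> ereal) \<Rightarrow> ('a \<Rightarrow> 'b::topological_space) \<Rightarrow> ('a \<Rightarrow> real) \<Rightarrow> ereal" where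
  "factor_utility M u Y X =
     (INF Z\<in>(\<lambda>Z. real_cond_exp M (vimage_algebra (space M) Y borel) Z) ` determining_set M u.
        EQ M Z X)"

end

(* Write the aggregate as c_n . F + eta_n, where c_n is the vector of column sums of B_n and
   eta_n = sum_k xi_n^k is a centred Gaussian of variance v_n = sum_k (sigma_n^k)^2.

   Conditioning a density Z of the determining set on F does not see the noise, which is independent
   of F and centred; hence u^f(c_n . F + eta_n; F) = u(c_n . F) exactly.  Without conditioning, law
   invariance and finiteness of u on Gaussians bound |E_Q eta_n| by K sqrt v_n uniformly in Q, so
   u(c_n . F + eta_n) = u(c_n . F) + O(sqrt v_n), and sqrt v_n = o(a_n) by hypothesis.

   Finally u(c . F) = inf {c . y | y in E} for the set E = {E_Q F | Q in D}, which is bounded because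
   the F^m lie in L^1_w.  This is a positively homogeneous Lipschitz function of c, so
   u(c_n . F) / a_n tends to u(b . F) < 0 and the ratio of the two utilities tends to 1. *)

theory Submission
  imports Defs
begin

section \<open>Expectations under the densities of the determining set\<close>

lemma EQ_eq_nn_integrals:
  assumes "AE \<omega> in M. 0 \<le> Z \<omega>"
  shows "EQ M Z X =
    (if (\<integral>\<^sup>+\<omega>. ennreal (- (Z \<omega> * X \<omega>)) \<partial>M) = \<top> then -\<infinity>
     else enn2ereal (\<integral>\<^sup>+\<omega>. ennreal (Z \<omega> * X \<omega>) \<partial>M)
        - enn2ereal (\<integral>\<^sup>+\<omega>. ennreal (- (Z \<omega> * X \<omega>)) \<partial>M))"
proof -
  have pos: "ennreal (z * max x 0) = ennreal (z * x)"
    and neg: "ennreal (z * max (- x) 0) = ennreal (- (z * x))" if "0 \<le> z" for z x :: real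
    using that by (auto simp: max_def ennreal_neg mult_nonneg_nonpos)
  have "(\<integral>\<^sup>+\<omega>. ennreal (Z \<omega> * max (X \<omega>) 0) \<partial>M) = (\<integral>\<^sup>+\<omega>. ennreal (Z \<omega> * X \<omega>) \<partial>M)"
    using assms by (intro nn_integral_cong_AE) (auto elim!: eventually_mono simp: pos)
  moreover have "(\<integral>\<^sup>+\<omega>. ennreal (Z \<omega> * max (- X \<omega>) 0) \<partial>M) = (\<integral>\<^sup>+\<omega>. ennreal (- (Z \<omega> * X \<omega>)) \<partial>M)"
    using assms by (intro nn_integral_cong_AE) (auto elim!: eventually_mono simp: neg)
  ultimately show ?thesis
    unfolding EQ_def Let_def by simp
qed

lemma EQ_eq_integral:
  assumes "AE \<omega> in M. 0 \<le> Z \<omega>" and "integrable M (\<lambda>\<omega>. Z \<omega> * X \<omega>)"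
  shows "EQ M Z X = ereal (\<integral>\<omega>. Z \<omega> * X \<omega> \<partial>M)"
proof -
  obtain r q where "0 \<le> r" "0 \<le> q"
    and "(\<integral>\<^sup>+\<omega>. ennreal (Z \<omega> * X \<omega>) \<partial>M) = ennreal r"
    and "(\<integral>\<^sup>+\<omega>. ennreal (- (Z \<omega> * X \<omega>)) \<partial>M) = ennreal q"
    and "(\<integral>\<omega>. Z \<omega> * X \<omega> \<partial>M) = r - q"
    by (rule integrableE[OF assms(2)])
  then show ?thesis
    by (simp add: EQ_eq_nn_integrals[OF assms(1)])
qed

lemma integrable_if_EQ_finite:
  assumes Z: "AE \<omega> in M. 0 \<le> Z \<omega>" and "(\<lambda>\<omega>. Z \<omega> * X \<omega>) \<in> borel_measurable M"
    and "EQ M Z X \<noteq> -\<infinity>" and "EQ M Z (\<lambda>\<omega>. - X \<omega>) \<noteq> -\<infinity>"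
  shows "integrable M (\<lambda>\<omega>. Z \<omega> * X \<omega>)"
proof -
  have "(\<integral>\<^sup>+\<omega>. ennreal (- (Z \<omega> * X' \<omega>)) \<partial>M) \<noteq> \<top>" if "EQ M Z X' \<noteq> -\<infinity>" for X'
    using that by (auto simp: EQ_eq_nn_integrals[OF Z] split: if_splits)
  from this[OF assms(3)] this[OF assms(4)] show ?thesis
    using assms(2) unfolding real_integrable_def by simp
qed

lemma dens_AE_nonneg: "Z \<in> dens M \<Longrightarrow> AE \<omega> in M. 0 \<le> Z \<omega>"
  by (auto simp: dens_def intro!: AE_I2)

lemma determining_set_subset_dens: "determining_set M u \<subseteq> dens M"
  by (auto simp: determining_set_def)

lemma coherent_utility_determining_set:
  assumes "coherent_utility M u"
  shows "determining_set M u \<noteq> {}"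
    and "X \<in> borel_measurable M \<Longrightarrow> u X = (INF Z\<in>determining_set M u. EQ M Z X)"
proof -
  obtain D where D: "D \<noteq> {}" "D \<subseteq> dens M" "\<And>X. X \<in> borel_measurable M \<Longrightarrow> u X = (INF Z\<in>D. EQ M Z X)"
    using assms unfolding coherent_utility_def by blast
  have sub: "D \<subseteq> determining_set M u"
    using D by (auto simp: determining_set_def intro: INF_lower)
  then show "determining_set M u \<noteq> {}"
    using D(1) by auto
  assume X: "X \<in> borel_measurable M"
  have "(INF Z\<in>determining_set M u. EQ M Z X) \<le> u X"
    using INF_superset_mono[OF sub order_refl] D(3)[OF X] by simp
  moreover have "u X \<le> (INF Z\<in>determining_set M u. EQ M Z X)"
    using X by (auto simp: determining_set_def intro!: INF_greatest)
  ultimately show "u X = (INF Z\<in>determining_set M u. EQ M Z X)"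
    by (rule antisym[rotated])
qed

lemma
  assumes X: "X \<in> L1w M u" and Z: "Z \<in> determining_set M u"
  shows integrable_L1w: "integrable M (\<lambda>\<omega>. Z \<omega> * X \<omega>)"
    and L1w_integral_lower: "u X \<le> ereal (\<integral>\<omega>. Z \<omega> * X \<omega> \<partial>M)"
    and L1w_integral_upper: "u (\<lambda>\<omega>. - X \<omega>) \<le> ereal (- (\<integral>\<omega>. Z \<omega> * X \<omega> \<partial>M))"
proof -
  have Z0: "AE \<omega> in M. 0 \<le> Z \<omega>" and Zm: "Z \<in> borel_measurable M"
    using Z dens_AE_nonneg by (auto simp: determining_set_def dens_def)
  have Xm: "X \<in> borel_measurable M" and le: "u X \<le> EQ M Z X" "u (\<lambda>\<omega>. - X \<omega>) \<le> EQ M Z (\<lambda>\<omega>. - X \<omega>)"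
    using X Z by (auto simp: L1w_def determining_set_def)
  have "EQ M Z X \<noteq> -\<infinity>" "EQ M Z (\<lambda>\<omega>. - X \<omega>) \<noteq> -\<infinity>"
    using le X by (auto simp: L1w_def)
  then show int: "integrable M (\<lambda>\<omega>. Z \<omega> * X \<omega>)"
    using Zm Xm by (intro integrable_if_EQ_finite[OF Z0]) auto
  show "u X \<le> ereal (\<integral>\<omega>. Z \<omega> * X \<omega> \<partial>M)"
    using le(1) EQ_eq_integral[OF Z0 int] by simp
  have "EQ M Z (\<lambda>\<omega>. - X \<omega>) = ereal (\<integral>\<omega>. Z \<omega> * - X \<omega> \<partial>M)"
    using int by (intro EQ_eq_integral[OF Z0]) simp
  then show "u (\<lambda>\<omega>. - X \<omega>) \<le> ereal (- (\<integral>\<omega>. Z \<omega> * X \<omega> \<partial>M))"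
    using le(2) by simp
qed

lemma L1w_abs_integral_le:
  assumes X: "X \<in> L1w M u" and Z: "Z \<in> determining_set M u"
  shows "\<bar>\<integral>\<omega>. Z \<omega> * X \<omega> \<partial>M\<bar> \<le> \<bar>real_of_ereal (u X)\<bar> + \<bar>real_of_ereal (u (\<lambda>\<omega>. - X \<omega>))\<bar>"
proof -
  have "u X \<noteq> -\<infinity>" "u (\<lambda>\<omega>. - X \<omega>) \<noteq> -\<infinity>"
    using X by (auto simp: L1w_def)
  with L1w_integral_lower[OF X Z] L1w_integral_upper[OF X Z] show ?thesis
    by (cases "u X"; cases "u (\<lambda>\<omega>. - X \<omega>)") auto
qed

lemma utility_eq_INF_integral:
  assumes "coherent_utility M u" and "X \<in> borel_measurable M"
    and "\<And>Z. Z \<in> determining_set M u \<Longrightarrow> integrable M (\<lambda>\<omega>. Z \<omega> * X \<omega>)"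
  shows "u X = (INF Z\<in>determining_set M u. ereal (\<integral>\<omega>. Z \<omega> * X \<omega> \<partial>M))"
  unfolding coherent_utility_determining_set(2)[OF assms(1,2)]
  using assms(3) determining_set_subset_dens dens_AE_nonneg
  by (intro INF_cong refl EQ_eq_integral) blast+

lemma
  assumes u: "coherent_utility M u" and X: "X \<in> borel_measurable M" and Y: "Y \<in> borel_measurable M"
    and ZX: "\<And>Z. Z \<in> determining_set M u \<Longrightarrow> integrable M (\<lambda>\<omega>. Z \<omega> * X \<omega>)"
    and ZY: "\<And>Z. Z \<in> determining_set M u \<Longrightarrow> integrable M (\<lambda>\<omega>. Z \<omega> * Y \<omega>)"
    and bound: "\<And>Z. Z \<in> determining_set M u \<Longrightarrow> \<bar>\<integral>\<omega>. Z \<omega> * Y \<omega> \<partial>M\<bar> \<le> \<delta>"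
  shows utility_add_lower: "u X - ereal \<delta> \<le> u (\<lambda>\<omega>. X \<omega> + Y \<omega>)"
    and utility_add_upper: "u (\<lambda>\<omega>. X \<omega> + Y \<omega>) \<le> u X + ereal \<delta>"
proof -
  let ?D = "determining_set M u"
  let ?E = "\<lambda>Z W. \<integral>\<omega>. Z \<omega> * W \<omega> \<partial>M"
  have uX: "u X = (INF Z\<in>?D. ereal (?E Z X))"
    using utility_eq_INF_integral[OF u X ZX] .
  have "u (\<lambda>\<omega>. X \<omega> + Y \<omega>) = (INF Z\<in>?D. ereal (?E Z (\<lambda>\<omega>. X \<omega> + Y \<omega>)))"
    using X Y ZX ZY by (intro utility_eq_INF_integral[OF u]) (auto simp: distrib_left)
  also have "\<dots> = (INF Z\<in>?D. ereal (?E Z X + ?E Z Y))"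
    using ZX ZY by (intro INF_cong refl) (simp add: distrib_left)
  finally have uXY: "u (\<lambda>\<omega>. X \<omega> + Y \<omega>) = (INF Z\<in>?D. ereal (?E Z X + ?E Z Y))" .
  show "u X - ereal \<delta> \<le> u (\<lambda>\<omega>. X \<omega> + Y \<omega>)"
    unfolding uXY
  proof (rule INF_greatest)
    fix Z assume Z: "Z \<in> ?D"
    have "u X \<le> ereal (?E Z X)"
      unfolding uX using Z by (rule INF_lower)
    also have "\<dots> \<le> ereal (?E Z X + ?E Z Y + \<delta>)"
      using bound[OF Z] by simp
    finally show "u X - ereal \<delta> \<le> ereal (?E Z X + ?E Z Y)"
      by (simp add: ereal_minus_le)
  qed
  have "u (\<lambda>\<omega>. X \<omega> + Y \<omega>) - ereal \<delta> \<le> u X"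
    unfolding uX
  proof (rule INF_greatest)
    fix Z assume Z: "Z \<in> ?D"
    have "u (\<lambda>\<omega>. X \<omega> + Y \<omega>) \<le> ereal (?E Z X + ?E Z Y)"
      unfolding uXY using Z by (rule INF_lower)
    also have "\<dots> \<le> ereal (?E Z X + \<delta>)"
      using bound[OF Z] by simp
    finally show "u (\<lambda>\<omega>. X \<omega> + Y \<omega>) - ereal \<delta> \<le> ereal (?E Z X)"
      by (simp add: ereal_minus_le)
  qed
  then show "u (\<lambda>\<omega>. X \<omega> + Y \<omega>) \<le> u X + ereal \<delta>"
    by (simp add: ereal_minus_le)
qed

section \<open>Utilities of linear combinations of the factors\<close>

definition lower_support :: "'v::real_inner set \<Rightarrow> 'v \<Rightarrow> real" where
  "lower_support E c = Inf ((\<lambda>y. c \<bullet> y) ` E)"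

lemma bdd_below_inner_image:
  assumes "bounded E"
  shows "bdd_below ((\<lambda>y. c \<bullet> y) ` E)"
proof -
  obtain R where R: "\<And>y. y \<in> E \<Longrightarrow> norm y \<le> R"
    using assms bounded_iff by blast
  have "- (norm c * R) \<le> c \<bullet> y" if "y \<in> E" for y
    using Cauchy_Schwarz_ineq2[of c y] mult_left_mono[OF R[OF that] norm_ge_zero[of c]] by linarith
  then show ?thesis
    by (intro bdd_belowI2)
qed

lemma lower_support_scaleR:
  assumes "bounded E" and "E \<noteq> {}" and "0 \<le> t"
  shows "lower_support E (t *\<^sub>R c) = t * lower_support E c"
proof -
  have "t * Inf ((\<lambda>y. c \<bullet> y) ` E) = Inf ((\<lambda>x. t * x) ` (\<lambda>y. c \<bullet> y) ` E)"
    using assms bdd_below_inner_image[OF assms(1)]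
    by (intro continuous_at_Inf_mono) (auto simp: mono_def mult_left_mono intro: continuous_intros)
  then show ?thesis
    unfolding lower_support_def by (simp add: image_comp o_def)
qed

lemma lower_support_lipschitz:
  assumes "E \<noteq> {}" and R: "\<And>y. y \<in> E \<Longrightarrow> norm y \<le> R"
  shows "R-lipschitz_on UNIV (lower_support E)"
proof -
  have bdd: "bdd_below ((\<lambda>y. c \<bullet> y) ` E)" for c
    using R by (intro bdd_below_inner_image) (auto simp: bounded_iff)
  have le: "lower_support E c \<le> lower_support E d + R * norm (c - d)" for c d
  proof -
    have "lower_support E c - R * norm (c - d) \<le> d \<bullet> y" if y: "y \<in> E" for y
    proof -
      have "lower_support E c \<le> c \<bullet> y"
        unfolding lower_support_def using bdd y by (intro cInf_lower) auto
      also have "\<dots> = d \<bullet> y + (c - d) \<bullet> y"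
        by (simp add: inner_diff_left)
      also have "\<dots> \<le> d \<bullet> y + R * norm (c - d)"
        using Cauchy_Schwarz_ineq2[of "c - d" y] mult_left_mono[OF R[OF y] norm_ge_zero[of "c - d"]]
        by (simp add: mult.commute)
      finally show ?thesis by simp
    qed
    then have "lower_support E c - R * norm (c - d) \<le> lower_support E d"
      unfolding lower_support_def[of E d] using assms(1) by (intro cInf_greatest) auto
    then show ?thesis by simp
  qed
  have "0 \<le> R"
    using assms order_trans[OF norm_ge_zero] by blast
  moreover have "dist (lower_support E c) (lower_support E d) \<le> R * dist c d" for c d
    using le[of c d] le[of d c] by (simp add: dist_real_def dist_norm norm_minus_commute abs_le_iff)
  ultimately show ?thesis
    by (intro lipschitz_onI)
qed

lemma lower_support_tendsto_scaled:
  assumes "bounded E" and "E \<noteq> {}" and lim: "(\<lambda>n. c n /\<^sub>R a n) \<longlonglongrightarrow> b"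
    and pos: "\<forall>\<^sub>F n in sequentially. 0 < a n"
  shows "(\<lambda>n. lower_support E (c n) / a n) \<longlonglongrightarrow> lower_support E b"
proof -
  obtain R where "\<And>y. y \<in> E \<Longrightarrow> norm y \<le> R"
    using assms(1) bounded_iff by blast
  then have "continuous_on UNIV (lower_support E)"
    by (intro lipschitz_on_continuous_on lower_support_lipschitz assms(2))
  then have "(\<lambda>n. lower_support E (c n /\<^sub>R a n)) \<longlonglongrightarrow> lower_support E b"
    using lim by (rule continuous_on_tendsto_compose) auto
  moreover have "\<forall>\<^sub>F n in sequentially. lower_support E (c n /\<^sub>R a n) = lower_support E (c n) / a n"
    using pos by eventually_elim (simp add: lower_support_scaleR[OF assms(1,2)] divide_inverse_commute)
  ultimately show ?thesis
    by (simp add: tendsto_cong)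
qed

definition determining_means ::
    "'a measure \<Rightarrow> (('a \<Rightarrow> real) \<Rightarrow> ereal) \<Rightarrow> ('a \<Rightarrow> real ^ 'm) \<Rightarrow> (real ^ 'm) set"
  where "determining_means M u F = (\<lambda>Z. \<chi> m. \<integral>\<omega>. Z \<omega> * F \<omega> $ m \<partial>M) ` determining_set M u"

lemma
  fixes F :: "'a \<Rightarrow> real ^ 'm"
  assumes F: "\<And>m. (\<lambda>\<omega>. F \<omega> $ m) \<in> L1w M u" and Z: "Z \<in> determining_set M u"
  shows integrable_inner_L1w: "integrable M (\<lambda>\<omega>. Z \<omega> * (c \<bullet> F \<omega>))"
    and integral_inner_L1w: "(\<integral>\<omega>. Z \<omega> * (c \<bullet> F \<omega>) \<partial>M) = c \<bullet> (\<chi> m. \<integral>\<omega>. Z \<omega> * F \<omega> $ m \<partial>M)"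
proof -
  have eq: "(\<lambda>\<omega>. Z \<omega> * (c \<bullet> F \<omega>)) = (\<lambda>\<omega>. \<Sum>m\<in>UNIV. c $ m * (Z \<omega> * F \<omega> $ m))"
    by (simp add: inner_vec_def sum_distrib_left ac_simps)
  show "integrable M (\<lambda>\<omega>. Z \<omega> * (c \<bullet> F \<omega>))"
    unfolding eq using integrable_L1w[OF F Z] by auto
  show "(\<integral>\<omega>. Z \<omega> * (c \<bullet> F \<omega>) \<partial>M) = c \<bullet> (\<chi> m. \<integral>\<omega>. Z \<omega> * F \<omega> $ m \<partial>M)"
    unfolding eq using integrable_L1w[OF F Z] by (simp add: inner_vec_def)
qed

lemma bounded_determining_means:
  fixes F :: "'a \<Rightarrow> real ^ 'm"
  assumes F: "\<And>m. (\<lambda>\<omega>. F \<omega> $ m) \<in> L1w M u"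
  shows "bounded (determining_means M u F)"
proof -
  define L where "L m = \<bar>real_of_ereal (u (\<lambda>\<omega>. F \<omega> $ m))\<bar> + \<bar>real_of_ereal (u (\<lambda>\<omega>. - F \<omega> $ m))\<bar>" for m
  have "norm y \<le> (\<Sum>m\<in>UNIV. L m)" if y: "y \<in> determining_means M u F" for y
  proof -
    obtain Z where Z: "Z \<in> determining_set M u" and y: "y = (\<chi> m. \<integral>\<omega>. Z \<omega> * F \<omega> $ m \<partial>M)"
      using y by (auto simp: determining_means_def)
    have "norm y \<le> (\<Sum>m\<in>UNIV. \<bar>y $ m\<bar>)"
      by (rule norm_le_l1_cart)
    also have "\<dots> \<le> (\<Sum>m\<in>UNIV. L m)"
      unfolding y L_def using L1w_abs_integral_le[OF F Z] by (intro sum_mono) simp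
    finally show ?thesis .
  qed
  then show ?thesis
    unfolding bounded_iff by blast
qed

lemma utility_inner_eq_lower_support:
  fixes F :: "'a \<Rightarrow> real ^ 'm"
  assumes u: "coherent_utility M u" and Fm: "F \<in> borel_measurable M"
    and F: "\<And>m. (\<lambda>\<omega>. F \<omega> $ m) \<in> L1w M u"
  shows "u (\<lambda>\<omega>. c \<bullet> F \<omega>) = ereal (lower_support (determining_means M u F) c)"
proof -
  let ?E = "determining_means M u F"
  have "u (\<lambda>\<omega>. c \<bullet> F \<omega>) = (INF Z\<in>determining_set M u. ereal (\<integral>\<omega>. Z \<omega> * (c \<bullet> F \<omega>) \<partial>M))"
    using Fm integrable_inner_L1w[OF F] by (intro utility_eq_INF_integral[OF u]) auto
  also have "\<dots> = (INF Z\<in>determining_set M u. ereal (c \<bullet> (\<chi> m. \<integral>\<omega>. Z \<omega> * F \<omega> $ m \<partial>M)))"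
    by (intro INF_cong refl) (simp add: integral_inner_L1w[OF F])
  also have "\<dots> = (INF y\<in>?E. ereal (c \<bullet> y))"
    by (simp add: determining_means_def image_image)
  also have "\<dots> = ereal (lower_support ?E c)"
    unfolding lower_support_def
    using bdd_below_inner_image[OF bounded_determining_means[OF F]] coherent_utility_determining_set(1)[OF u]
    by (subst ereal_Inf') (auto simp: image_comp determining_means_def)
  finally show ?thesis .
qed

section \<open>Gaussian random variables\<close>

lemma gaussian_iff_distr:
  "gaussian M X \<mu> v \<longleftrightarrow> 0 \<le> v \<and> X \<in> borel_measurable M \<and>
     distr M borel X = (if v = 0 then return borel \<mu> else density lborel (normal_density \<mu> (sqrt v)))"
proof -
  have "distr M lborel X = distr M borel X"
    by (rule distr_cong) simp_all
  then show ?thesis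
    by (auto simp: gaussian_def distributed_def)
qed

lemma gaussian_AE_cong:
  assumes X: "gaussian M X \<mu> v" and Y: "Y \<in> borel_measurable M" and "AE \<omega> in M. X \<omega> = Y \<omega>"
  shows "gaussian M Y \<mu> v"
proof -
  have "distr M borel Y = distr M borel X"
    using assms by (intro distr_cong_AE) (auto simp: gaussian_def)
  with X Y show ?thesis
    by (simp add: gaussian_iff_distr)
qed

lemma law_invariant_gaussian:
  "law_invariant M u \<Longrightarrow> gaussian M X \<mu> v \<Longrightarrow> gaussian M Y \<mu> v \<Longrightarrow> u X = u Y"
  by (auto simp: law_invariant_def gaussian_iff_distr)

lemma (in prob_space) gaussian_zero_variance_iff:
  "gaussian M X \<mu> 0 \<longleftrightarrow> X \<in> borel_measurable M \<and> (AE \<omega> in M. X \<omega> = \<mu>)"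
proof (intro iffI conjI)
  assume X: "gaussian M X \<mu> 0"
  then show Xm: "X \<in> borel_measurable M"
    by (simp add: gaussian_def)
  have d: "distr M borel X = return borel \<mu>"
    using X by (simp add: gaussian_def)
  have "AE x in distr M borel X. x = \<mu>"
    by (subst d) (rule AE_return[THEN iffD2]; simp)
  then show "AE \<omega> in M. X \<omega> = \<mu>"
    by (rule AE_distrD[OF Xm])
next
  assume X: "X \<in> borel_measurable M \<and> (AE \<omega> in M. X \<omega> = \<mu>)"
  then have "distr M borel X = distr M borel (\<lambda>_. \<mu>)"
    by (intro distr_cong_AE) auto
  then show "gaussian M X \<mu> 0"
    using X by (simp add: gaussian_def distr_const)
qed

lemma (in prob_space)
  assumes X: "gaussian M X \<mu> v"
  shows integrable_gaussian: "integrable M X"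
    and expectation_gaussian: "expectation X = \<mu>"
proof -
  have "integrable M X \<and> expectation X = \<mu>"
  proof (cases "v = 0")
    case True
    then have "X \<in> borel_measurable M" "AE \<omega> in M. X \<omega> = \<mu>"
      using X gaussian_zero_variance_iff by auto
    then have "integrable M X \<longleftrightarrow> integrable M (\<lambda>_. \<mu>)" "expectation X = expectation (\<lambda>_. \<mu>)"
      by (intro integrable_cong_AE integral_cong_AE; simp)+
    then show ?thesis
      by (simp add: prob_space)
  next
    case False
    with X have "0 < sqrt v" and d: "distributed M lborel X (normal_density \<mu> (sqrt v))"
      by (auto simp: gaussian_def)
    then show ?thesis
      using distributed_integrable_var[OF d normal_density_nonneg integrable_normal_moment_nz_1] normal_distributed_expectation
      by blast
  qed
  then show "integrable M X" "expectation X = \<mu>" by auto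
qed

lemma (in prob_space) gaussian_affine:
  assumes X: "gaussian M X \<mu> v" and "t \<noteq> 0"
  shows "gaussian M (\<lambda>\<omega>. \<beta> + t * X \<omega>) (\<beta> + t * \<mu>) (t\<^sup>2 * v)"
proof (cases "v = 0")
  case True
  then show ?thesis
    using X by (auto simp: gaussian_zero_variance_iff elim!: eventually_mono)
next
  case False
  with X have "0 < sqrt v" and d: "distributed M lborel X (normal_density \<mu> (sqrt v))"
    by (auto simp: gaussian_def)
  from normal_density_affine[OF d this(1) \<open>t \<noteq> 0\<close>, of \<beta>]
  have tX: "distributed M lborel (\<lambda>\<omega>. \<beta> + t * X \<omega>) (normal_density (\<beta> + t * \<mu>) (sqrt (t\<^sup>2 * v)))"
    by (simp add: real_sqrt_mult)
  then show ?thesis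
    using X False \<open>t \<noteq> 0\<close> distributed_measurable[OF tX] by (simp add: gaussian_def)
qed

lemma (in prob_space) gaussian_sum_nondegenerate:
  assumes "finite I" and "I \<noteq> {}" and "indep_vars (\<lambda>_. borel) X I"
    and X: "\<And>i. i \<in> I \<Longrightarrow> gaussian M (X i) (\<mu> i) (v i)" and v: "\<And>i. i \<in> I \<Longrightarrow> 0 < v i"
  shows "gaussian M (\<lambda>\<omega>. \<Sum>i\<in>I. X i \<omega>) (\<Sum>i\<in>I. \<mu> i) (\<Sum>i\<in>I. v i)"
proof -
  have "distributed M lborel (X i) (normal_density (\<mu> i) (sqrt (v i)))" if "i \<in> I" for i
    using X[OF that] v[OF that] by (simp add: gaussian_def)
  then have "distributed M lborel (\<lambda>\<omega>. \<Sum>i\<in>I. X i \<omega>)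
      (normal_density (\<Sum>i\<in>I. \<mu> i) (sqrt (\<Sum>i\<in>I. (sqrt (v i))\<^sup>2)))"
    using assms by (intro sum_indep_normal) auto
  moreover have "(\<Sum>i\<in>I. (sqrt (v i))\<^sup>2) = (\<Sum>i\<in>I. v i)"
    using v by (intro sum.cong) (auto simp: less_imp_le)
  moreover have "0 < (\<Sum>i\<in>I. v i)"
    using assms by (intro sum_pos) auto
  ultimately show ?thesis
    using distributed_measurable by (fastforce simp: gaussian_def)
qed

lemma (in prob_space) gaussian_sum:
  assumes I: "finite I" and indep: "indep_vars (\<lambda>_. borel) X I"
    and X: "\<And>i. i \<in> I \<Longrightarrow> gaussian M (X i) (\<mu> i) (v i)"
  shows "gaussian M (\<lambda>\<omega>. \<Sum>i\<in>I. X i \<omega>) (\<Sum>i\<in>I. \<mu> i) (\<Sum>i\<in>I. v i)"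
proof -
  define P where "P = {i\<in>I. v i \<noteq> 0}"
  have P: "P \<subseteq> I" "finite P"
    using I by (auto simp: P_def)
  have Xm: "X i \<in> borel_measurable M" and v0: "0 \<le> v i" if "i \<in> I" for i
    using X[OF that] by (auto simp: gaussian_def)
  have "AE \<omega> in M. X i \<omega> = \<mu> i" if "i \<in> I - P" for i
    using X[of i] that gaussian_zero_variance_iff[of "X i" "\<mu> i"] by (auto simp: P_def)
  then have "AE \<omega> in M. \<forall>i\<in>I - P. X i \<omega> = \<mu> i"
    using I by (subst AE_finite_all) auto
  then have AE: "AE \<omega> in M. (\<Sum>i\<in>I - P. \<mu> i) + (\<Sum>i\<in>P. X i \<omega>) = (\<Sum>i\<in>I. X i \<omega>)"
    by eventually_elim (simp add: sum.subset_diff[OF P(1) I])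
  have "gaussian M (\<lambda>\<omega>. (\<Sum>i\<in>I - P. \<mu> i) + 1 * (\<Sum>i\<in>P. X i \<omega>))
      ((\<Sum>i\<in>I - P. \<mu> i) + 1 * (\<Sum>i\<in>P. \<mu> i)) (1\<^sup>2 * (\<Sum>i\<in>P. v i))"
  proof (cases "P = {}")
    case True
    then show ?thesis
      by (simp add: gaussian_zero_variance_iff)
  next
    case False
    then show ?thesis
      using P X v0 indep_vars_subset[OF indep P(1)]
      by (intro gaussian_affine gaussian_sum_nondegenerate) (auto simp: P_def order.not_eq_order_implies_strict)
  qed
  moreover have "(\<Sum>i\<in>I. v i) = (\<Sum>i\<in>P. v i)"
    using I by (intro sum.mono_neutral_right) (auto simp: P_def)
  ultimately have "gaussian M (\<lambda>\<omega>. (\<Sum>i\<in>I - P. \<mu> i) + (\<Sum>i\<in>P. X i \<omega>)) (\<Sum>i\<in>I. \<mu> i) (\<Sum>i\<in>I. v i)"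
    by (simp add: sum.subset_diff[OF P(1) I, of \<mu>])
  moreover have "(\<lambda>\<omega>. \<Sum>i\<in>I. X i \<omega>) \<in> borel_measurable M"
    using Xm by (intro borel_measurable_sum) auto
  ultimately show ?thesis
    using AE by (rule gaussian_AE_cong)
qed

lemma (in prob_space) standard_gaussian_integral_bound:
  assumes law: "law_invariant M u" and fin: "finite_on_gaussians M u"
    and G: "gaussian M G 0 1" and X: "gaussian M X 0 1" and Z: "Z \<in> determining_set M u"
  shows "integrable M (\<lambda>\<omega>. Z \<omega> * X \<omega>)"
    and "\<bar>\<integral>\<omega>. Z \<omega> * X \<omega> \<partial>M\<bar> \<le> 2 * \<bar>real_of_ereal (u G)\<bar>"
proof -
  have "gaussian M (\<lambda>\<omega>. - X \<omega>) 0 1"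
    using gaussian_affine[OF X, of "-1" 0] by simp
  then have uX: "u X = u G" "u (\<lambda>\<omega>. - X \<omega>) = u G"
    using law_invariant_gaussian[OF law] X G by blast+
  moreover have "\<bar>u G\<bar> \<noteq> \<infinity>"
    by (rule fin[unfolded finite_on_gaussians_def, rule_format, OF G])
  ultimately have "X \<in> L1w M u"
    using X by (auto simp: L1w_def gaussian_def)
  then show "integrable M (\<lambda>\<omega>. Z \<omega> * X \<omega>)" "\<bar>\<integral>\<omega>. Z \<omega> * X \<omega> \<partial>M\<bar> \<le> 2 * \<bar>real_of_ereal (u G)\<bar>"
    using integrable_L1w[OF _ Z] L1w_abs_integral_le[OF _ Z, of X] uX by auto
qed

lemma (in prob_space) gaussian_integral_bound:
  assumes law: "law_invariant M u" and fin: "finite_on_gaussians M u"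
  obtains K where "\<And>\<eta> v Z. gaussian M \<eta> 0 v \<Longrightarrow> Z \<in> determining_set M u \<Longrightarrow>
      integrable M (\<lambda>\<omega>. Z \<omega> * \<eta> \<omega>) \<and> \<bar>\<integral>\<omega>. Z \<omega> * \<eta> \<omega> \<partial>M\<bar> \<le> K * sqrt v"
proof -
  (* If there is no standard Gaussian, all Gaussians are degenerate and the choice of G is irrelevant. *)
  define G where "G = (SOME G. gaussian M G 0 1)"
  have "integrable M (\<lambda>\<omega>. Z \<omega> * \<eta> \<omega>) \<and>
      \<bar>\<integral>\<omega>. Z \<omega> * \<eta> \<omega> \<partial>M\<bar> \<le> 2 * \<bar>real_of_ereal (u G)\<bar> * sqrt v"
    if \<eta>: "gaussian M \<eta> 0 v" and Z: "Z \<in> determining_set M u" for \<eta> v Z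
  proof (cases "v = 0")
    case True
    have "Z \<in> borel_measurable M" "\<eta> \<in> borel_measurable M"
      using Z \<eta> by (auto simp: determining_set_def dens_def gaussian_def)
    then have m: "(\<lambda>\<omega>. Z \<omega> * \<eta> \<omega>) \<in> borel_measurable M"
      by (rule borel_measurable_times)
    have "AE \<omega> in M. Z \<omega> * \<eta> \<omega> = 0"
      using \<eta> True by (auto simp: gaussian_zero_variance_iff elim!: eventually_mono)
    then have "integrable M (\<lambda>\<omega>. Z \<omega> * \<eta> \<omega>) \<longleftrightarrow> integrable M (\<lambda>_. 0::real)"
      "(\<integral>\<omega>. Z \<omega> * \<eta> \<omega> \<partial>M) = (\<integral>\<omega>. 0 \<partial>M)"
      using m by (intro integrable_cong_AE integral_cong_AE; simp)+
    then show ?thesis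
      using True by simp
  next
    case False
    then have v: "0 < v"
      using \<eta> by (simp add: gaussian_def)
    define X where "X = (\<lambda>\<omega>. \<eta> \<omega> / sqrt v)"
    have X: "gaussian M X 0 1"
      using gaussian_affine[OF \<eta>, of "1 / sqrt v" 0] v by (simp add: X_def power_divide)
    moreover have "gaussian M G 0 1"
      unfolding G_def using X by (rule someI[where P = "\<lambda>G. gaussian M G 0 1"])
    ultimately have "integrable M (\<lambda>\<omega>. Z \<omega> * X \<omega>)"
      "\<bar>\<integral>\<omega>. Z \<omega> * X \<omega> \<partial>M\<bar> \<le> 2 * \<bar>real_of_ereal (u G)\<bar>"
      using standard_gaussian_integral_bound[OF law fin _ _ Z] by auto
    moreover have "(\<lambda>\<omega>. Z \<omega> * \<eta> \<omega>) = (\<lambda>\<omega>. sqrt v * (Z \<omega> * X \<omega>))"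
      using v by (auto simp: X_def)
    ultimately show ?thesis
      using v by (simp add: abs_mult mult.commute mult_left_mono)
  qed
  then show ?thesis
    by (rule that)
qed

section \<open>Independence of the noise from the factors\<close>

lemma (in prob_space) indep_sets_reindex:
  assumes inj: "inj_on f I" and indep: "indep_sets A (f ` I)"
  shows "indep_sets (\<lambda>i. A (f i)) I"
proof (rule indep_setsI)
  show "A (f i) \<subseteq> events" if "i \<in> I" for i
    using indep that by (auto simp: indep_sets_def)
next
  fix B J assume J: "J \<noteq> {}" "J \<subseteq> I" "finite J" and B: "\<forall>j\<in>J. B j \<in> A (f j)"
  have inv: "inv_into I f (f j) = j" if "j \<in> J" for j
    using inj J(2) that by (auto intro: inv_into_f_f)
  have "prob (\<Inter>j\<in>f ` J. B (inv_into I f j)) = (\<Prod>j\<in>f ` J. prob (B (inv_into I f j)))"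
    using J B inv by (intro indep_setsD[OF indep]) auto
  moreover have "inj_on f J"
    using inj J(2) by (rule inj_on_subset)
  ultimately show "prob (\<Inter>j\<in>J. B j) = (\<Prod>j\<in>J. prob (B j))"
    using inv by (simp add: prod.reindex image_comp cong: INF_cong)
qed

lemma (in prob_space) indep_var_of_indep_sets:
  assumes indep: "indep_sets A I" and "i \<in> I" "j \<in> I" "i \<noteq> j"
    and X: "random_variable S X" and Y: "random_variable T Y"
    and XA: "sigma_sets (space M) {X -` B \<inter> space M | B. B \<in> sets S} \<subseteq> A i"
    and YA: "sigma_sets (space M) {Y -` B \<inter> space M | B. B \<in> sets T} \<subseteq> A j"
  shows "indep_var S X T Y"
  unfolding indep_var_eq indep_sets2_eq
proof (intro conjI X Y ballI)
  have "A i \<subseteq> events" "A j \<subseteq> events"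
    using indep \<open>i \<in> I\<close> \<open>j \<in> I\<close> by (auto simp: indep_sets_def)
  then show "sigma_sets (space M) {X -` B \<inter> space M | B. B \<in> sets S} \<subseteq> events"
    "sigma_sets (space M) {Y -` B \<inter> space M | B. B \<in> sets T} \<subseteq> events"
    using XA YA by auto
  fix a b
  assume "a \<in> sigma_sets (space M) {X -` B \<inter> space M | B. B \<in> sets S}"
    and "b \<in> sigma_sets (space M) {Y -` B \<inter> space M | B. B \<in> sets T}"
  then have "prob (\<Inter>l\<in>{i, j}. if l = i then a else b) = (\<Prod>l\<in>{i, j}. prob (if l = i then a else b))"
    using assms by (intro indep_setsD[OF indep]) auto
  then show "prob (a \<inter> b) = prob a * prob b"
    using \<open>i \<noteq> j\<close> by (simp add: Int_commute)
qed

lemma (in prob_space) indep_vars_of_factor_family: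
  fixes F :: "'a \<Rightarrow> 'b::topological_space"
  assumes indep: "indep_sets (\<lambda>i. case i of None \<Rightarrow> sets (vimage_algebra (space M) F borel)
                                   | Some k \<Rightarrow> sets (vimage_algebra (space M) (X k) borel))
                  (insert None (Some ` I))"
    and X: "\<And>k. k \<in> I \<Longrightarrow> X k \<in> borel_measurable M"
  shows "indep_vars (\<lambda>_. borel) X I"
proof -
  have "indep_sets (\<lambda>k. sets (vimage_algebra (space M) (X k) borel)) I"
    using indep_sets_reindex[of Some I, OF _ indep_sets_mono_index[OF _ indep]] by auto
  then show ?thesis
    using X by (simp add: indep_vars_def sets_vimage_algebra)
qed

lemma (in prob_space) indep_var_of_factor_family:
  fixes F :: "'a \<Rightarrow> 'b::topological_space"
  assumes indep: "indep_sets (\<lambda>i. case i of None \<Rightarrow> sets (vimage_algebra (space M) F borel)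
                                   | Some k \<Rightarrow> sets (vimage_algebra (space M) (X k) borel))
                  (insert None (Some ` I))"
    and k: "k \<in> I" and Xk: "X k \<in> borel_measurable M"
    and W: "W \<in> borel_measurable (vimage_algebra (space M) F borel)" "W \<in> borel_measurable M"
  shows "indep_var borel W borel (X k)"
proof -
  have WF: "sigma_sets (space M) {W -` B \<inter> space M | B. B \<in> sets borel} \<subseteq> sets (vimage_algebra (space M) F borel)"
    using W(1) sets.top[of "vimage_algebra (space M) F borel"]
    by (intro sets.sigma_sets_subset') (auto simp: measurable_sets)
  show ?thesis
    by (rule indep_var_of_indep_sets[OF indep, of None "Some k"])
      (use k Xk W(2) WF in \<open>simp_all add: sets_vimage_algebra\<close>)
qed

lemma subalgebra_vimage_algebra:
  "F \<in> measurable M N \<Longrightarrow> subalgebra M (vimage_algebra (space M) F N)"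
  by (auto simp: subalgebra_def sets_vimage_algebra2 measurable_sets measurable_space)

lemma (in prob_space)
  fixes F :: "'a \<Rightarrow> 'b::topological_space"
  assumes F: "F \<in> borel_measurable M"
    and Y: "Y \<in> borel_measurable (vimage_algebra (space M) F borel)"
    and Z: "Z \<in> borel_measurable M" "integrable M Z" "integrable M (\<lambda>\<omega>. Z \<omega> * Y \<omega>)"
    and I: "finite I"
    and indep: "\<And>k W. k \<in> I \<Longrightarrow> W \<in> borel_measurable (vimage_algebra (space M) F borel) \<Longrightarrow>
      W \<in> borel_measurable M \<Longrightarrow> indep_var borel W borel (X k)"
    and X: "\<And>k. k \<in> I \<Longrightarrow> integrable M (X k)" "\<And>k. k \<in> I \<Longrightarrow> expectation (X k) = 0"
  shows integrable_cond_exp_add_independent: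
      "integrable M (\<lambda>\<omega>. real_cond_exp M (vimage_algebra (space M) F borel) Z \<omega> * (Y \<omega> + (\<Sum>k\<in>I. X k \<omega>)))"
    and integral_cond_exp_add_independent:
      "(\<integral>\<omega>. real_cond_exp M (vimage_algebra (space M) F borel) Z \<omega> * (Y \<omega> + (\<Sum>k\<in>I. X k \<omega>)) \<partial>M)
        = (\<integral>\<omega>. Z \<omega> * Y \<omega> \<partial>M)"
proof -
  let ?G = "vimage_algebra (space M) F borel"
  interpret G: finite_measure_subalgebra M ?G
    using subalgebra_vimage_algebra[OF F] by unfold_locales
  let ?W = "real_cond_exp M ?G Z"
  have WY: "integrable M (\<lambda>\<omega>. ?W \<omega> * Y \<omega>)" "(\<integral>\<omega>. ?W \<omega> * Y \<omega> \<partial>M) = (\<integral>\<omega>. Z \<omega> * Y \<omega> \<partial>M)"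
    using G.real_cond_exp_intg[of Y Z] Y Z(1,3) by (simp_all add: mult.commute)
  have WX: "integrable M (\<lambda>\<omega>. ?W \<omega> * X k \<omega>)" "(\<integral>\<omega>. ?W \<omega> * X k \<omega> \<partial>M) = 0" if k: "k \<in> I" for k
  proof -
    have ind: "indep_var borel ?W borel (X k)"
      using indep[OF k] by simp
    have W: "integrable M ?W"
      using G.real_cond_exp_int(1)[OF Z(2)] .
    show "integrable M (\<lambda>\<omega>. ?W \<omega> * X k \<omega>)"
      by (rule indep_var_integrable[OF ind W X(1)[OF k]])
    show "(\<integral>\<omega>. ?W \<omega> * X k \<omega> \<partial>M) = 0"
      using indep_var_lebesgue_integral[OF ind W X(1)[OF k]] X(2)[OF k] by simp
  qed
  have eq: "(\<lambda>\<omega>. ?W \<omega> * (Y \<omega> + (\<Sum>k\<in>I. X k \<omega>))) = (\<lambda>\<omega>. ?W \<omega> * Y \<omega> + (\<Sum>k\<in>I. ?W \<omega> * X k \<omega>))"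
    by (simp add: distrib_left sum_distrib_left)
  show "integrable M (\<lambda>\<omega>. ?W \<omega> * (Y \<omega> + (\<Sum>k\<in>I. X k \<omega>)))"
    unfolding eq using WY WX by auto
  show "(\<integral>\<omega>. ?W \<omega> * (Y \<omega> + (\<Sum>k\<in>I. X k \<omega>)) \<partial>M) = (\<integral>\<omega>. Z \<omega> * Y \<omega> \<partial>M)"
    unfolding eq using WY WX by (simp add: Bochner_Integration.integral_sum)
qed

lemma (in prob_space) factor_utility_add_independent:
  fixes F :: "'a \<Rightarrow> 'b::topological_space"
  assumes u: "coherent_utility M u" and F: "F \<in> borel_measurable M"
    and Y: "Y \<in> borel_measurable (vimage_algebra (space M) F borel)"
    and YZ: "\<And>Z. Z \<in> determining_set M u \<Longrightarrow> integrable M (\<lambda>\<omega>. Z \<omega> * Y \<omega>)"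
    and I: "finite I"
    and indep: "indep_sets (\<lambda>i. case i of None \<Rightarrow> sets (vimage_algebra (space M) F borel)
                                   | Some k \<Rightarrow> sets (vimage_algebra (space M) (X k) borel))
                  (insert None (Some ` I))"
    and X: "\<And>k. k \<in> I \<Longrightarrow> X k \<in> borel_measurable M"
      "\<And>k. k \<in> I \<Longrightarrow> integrable M (X k)" "\<And>k. k \<in> I \<Longrightarrow> expectation (X k) = 0"
  shows "factor_utility M u F (\<lambda>\<omega>. Y \<omega> + (\<Sum>k\<in>I. X k \<omega>)) = u Y"
proof -
  let ?G = "vimage_algebra (space M) F borel"
  interpret G: finite_measure_subalgebra M ?G
    using subalgebra_vimage_algebra[OF F] by unfold_locales
  have indep': "indep_var borel W borel (X k)"
    if "k \<in> I" "W \<in> borel_measurable ?G" "W \<in> borel_measurable M" for k and W :: "'a \<Rightarrow> real"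
    using indep_var_of_factor_family[OF indep that(1) X(1)[OF that(1)] that(2,3)] .
  have "EQ M (real_cond_exp M ?G Z) (\<lambda>\<omega>. Y \<omega> + (\<Sum>k\<in>I. X k \<omega>)) = ereal (\<integral>\<omega>. Z \<omega> * Y \<omega> \<partial>M)"
    if Z: "Z \<in> determining_set M u" for Z
  proof -
    have Zm: "Z \<in> borel_measurable M" "integrable M Z"
      using Z by (auto simp: determining_set_def dens_def)
    moreover have "AE \<omega> in M. 0 \<le> Z \<omega>"
      using Z determining_set_subset_dens dens_AE_nonneg by blast
    ultimately have "AE \<omega> in M. 0 \<le> real_cond_exp M ?G Z \<omega>"
      by (intro G.real_cond_exp_pos)
    then show ?thesis
      using Zm YZ[OF Z]
      by (simp add: EQ_eq_integral integrable_cond_exp_add_independent[OF F Y _ _ _ I indep' X(2,3)]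
          integral_cond_exp_add_independent[OF F Y _ _ _ I indep' X(2,3)])
  qed
  then have "factor_utility M u F (\<lambda>\<omega>. Y \<omega> + (\<Sum>k\<in>I. X k \<omega>))
      = (INF Z\<in>determining_set M u. ereal (\<integral>\<omega>. Z \<omega> * Y \<omega> \<partial>M))"
    unfolding factor_utility_def image_image by (simp cong: INF_cong)
  also have "\<dots> = u Y"
    using measurable_from_subalg[OF G.subalg Y] YZ by (intro utility_eq_INF_integral[symmetric] u)
  finally show ?thesis .
qed

section \<open>Asymptotics\<close>

lemma ereal_divide_tendsto_one:
  fixes \<alpha> \<delta> a :: "nat \<Rightarrow> real" and C :: "nat \<Rightarrow> ereal"
  assumes \<alpha>: "(\<lambda>n. \<alpha> n / a n) \<longlonglongrightarrow> \<phi>" and "\<phi> \<noteq> 0" and \<delta>: "(\<lambda>n. \<delta> n / a n) \<longlonglongrightarrow> 0"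
    and a: "\<forall>\<^sub>F n in sequentially. a n \<noteq> 0"
    and lower: "\<And>n. ereal (\<alpha> n - \<delta> n) \<le> C n" and upper: "\<And>n. C n \<le> ereal (\<alpha> n + \<delta> n)"
  shows "(\<lambda>n. ereal (\<alpha> n) / C n) \<longlonglongrightarrow> 1"
proof -
  define \<gamma> where "\<gamma> n = real_of_ereal (C n)" for n
  have C: "C n = ereal (\<gamma> n)" and close: "\<bar>\<gamma> n - \<alpha> n\<bar> \<le> \<delta> n" for n
    using lower[of n] upper[of n] unfolding \<gamma>_def by (cases "C n"; simp)+
  have bound: "\<bar>\<gamma> n / a n - \<alpha> n / a n\<bar> \<le> \<bar>\<delta> n / a n\<bar>" for n
  proof -
    have "\<bar>\<gamma> n / a n - \<alpha> n / a n\<bar> = \<bar>\<gamma> n - \<alpha> n\<bar> / \<bar>a n\<bar>"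
      by (simp only: diff_divide_distrib[symmetric] abs_divide)
    also have "\<dots> \<le> \<bar>\<delta> n\<bar> / \<bar>a n\<bar>"
      using close[of n] by (intro divide_right_mono) auto
    finally show ?thesis
      by (simp add: abs_divide)
  qed
  have "(\<lambda>n. \<gamma> n / a n - \<alpha> n / a n) \<longlonglongrightarrow> 0"
    by (rule Lim_null_comparison[OF _ tendsto_rabs_zero[OF \<delta>]]) (use bound in \<open>simp add: always_eventually\<close>)
  from tendsto_add[OF this \<alpha>] have \<gamma>: "(\<lambda>n. \<gamma> n / a n) \<longlonglongrightarrow> \<phi>"
    by simp
  have "(\<lambda>n. (\<alpha> n / a n) / (\<gamma> n / a n)) \<longlonglongrightarrow> \<phi> / \<phi>"
    using \<alpha> \<gamma> \<open>\<phi> \<noteq> 0\<close> by (rule tendsto_divide)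
  then have "(\<lambda>n. ereal ((\<alpha> n / a n) / (\<gamma> n / a n))) \<longlonglongrightarrow> ereal 1"
    using \<open>\<phi> \<noteq> 0\<close> by (intro tendsto_ereal) simp
  moreover have "\<forall>\<^sub>F n in sequentially. \<gamma> n / a n \<noteq> 0"
    using \<gamma> \<open>\<phi> \<noteq> 0\<close> by (rule tendsto_imp_eventually_ne)
  with a have "\<forall>\<^sub>F n in sequentially. ereal ((\<alpha> n / a n) / (\<gamma> n / a n)) = ereal (\<alpha> n) / C n"
    by eventually_elim (simp add: C ereal_divide)
  ultimately show ?thesis
    by (simp add: tendsto_cong one_ereal_def[symmetric])
qed

lemma tendsto_sqrt_divide_zero:
  assumes "(\<lambda>n. v n / (a n)\<^sup>2) \<longlonglongrightarrow> 0" and "\<forall>\<^sub>F n in sequentially. 0 < a n"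
  shows "(\<lambda>n. sqrt (v n) / a n) \<longlonglongrightarrow> 0"
proof -
  have "(\<lambda>n. sqrt (v n / (a n)\<^sup>2)) \<longlonglongrightarrow> sqrt 0"
    using assms(1) by (rule tendsto_real_sqrt)
  moreover have "\<forall>\<^sub>F n in sequentially. sqrt (v n / (a n)\<^sup>2) = sqrt (v n) / a n"
    using assms(2) by eventually_elim (simp add: real_sqrt_divide)
  ultimately show ?thesis
    by (simp add: tendsto_cong)
qed

lemma utility_ratio_tendsto_one:
  fixes F :: "'a \<Rightarrow> real ^ 'm" and c :: "nat \<Rightarrow> real ^ 'm"
  assumes u: "coherent_utility M u" and Fm: "F \<in> borel_measurable M"
    and F: "\<And>m. (\<lambda>\<omega>. F \<omega> $ m) \<in> L1w M u" and neg: "u (\<lambda>\<omega>. b \<bullet> F \<omega>) < 0"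
    and c: "(\<lambda>n. c n /\<^sub>R a n) \<longlonglongrightarrow> b" and pos: "\<forall>\<^sub>F n in sequentially. 0 < a n"
    and N: "\<And>n. N n \<in> borel_measurable M"
    and NZ: "\<And>n Z. Z \<in> determining_set M u \<Longrightarrow>
      integrable M (\<lambda>\<omega>. Z \<omega> * N n \<omega>) \<and> \<bar>\<integral>\<omega>. Z \<omega> * N n \<omega> \<partial>M\<bar> \<le> \<delta> n"
    and \<delta>: "(\<lambda>n. \<delta> n / a n) \<longlonglongrightarrow> 0"
  shows "(\<lambda>n. u (\<lambda>\<omega>. c n \<bullet> F \<omega>) / u (\<lambda>\<omega>. c n \<bullet> F \<omega> + N n \<omega>)) \<longlonglongrightarrow> 1"
proof -
  define \<phi> where "\<phi> = lower_support (determining_means M u F)"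
  have uF: "u (\<lambda>\<omega>. c \<bullet> F \<omega>) = ereal (\<phi> c)" for c
    unfolding \<phi>_def by (rule utility_inner_eq_lower_support[OF u Fm F])
  have cF: "(\<lambda>\<omega>. c \<bullet> F \<omega>) \<in> borel_measurable M" for c
    by (intro borel_measurable_inner borel_measurable_const Fm)
  have lower: "ereal (\<phi> (c n) - \<delta> n) \<le> u (\<lambda>\<omega>. c n \<bullet> F \<omega> + N n \<omega>)"
    and upper: "u (\<lambda>\<omega>. c n \<bullet> F \<omega> + N n \<omega>) \<le> ereal (\<phi> (c n) + \<delta> n)" for n
    using utility_add_lower[OF u cF N integrable_inner_L1w[OF F] conjunct1[OF NZ] conjunct2[OF NZ]]
      utility_add_upper[OF u cF N integrable_inner_L1w[OF F] conjunct1[OF NZ] conjunct2[OF NZ]]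
    by (simp_all add: uF)
  have lim: "(\<lambda>n. \<phi> (c n) / a n) \<longlonglongrightarrow> \<phi> b"
    unfolding \<phi>_def using coherent_utility_determining_set(1)[OF u]
    by (intro lower_support_tendsto_scaled[OF bounded_determining_means[OF F] _ c pos])
      (simp add: determining_means_def)
  have "\<phi> b \<noteq> 0"
    using neg by (simp add: uF)
  moreover have "\<forall>\<^sub>F n in sequentially. a n \<noteq> 0"
    using pos by eventually_elim simp
  ultimately show ?thesis
    unfolding uF using ereal_divide_tendsto_one[OF lim _ \<delta> _ lower upper] by blast
qed

theorem theorem3p9:
  fixes M :: "'a measure"
    and u :: "('a \<Rightarrow> real) \<Rightarrow> ereal"
    and F :: "'a \<Rightarrow> real ^ 'm"
    and B :: "nat \<Rightarrow> nat \<Rightarrow> real ^ 'm"   \<comment> \<open>B n k = k-th row of B_n, entries B n k $ m\<close>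
    and \<xi> :: "nat \<Rightarrow> nat \<Rightarrow> 'a \<Rightarrow> real"
    and \<sigma> :: "nat \<Rightarrow> nat \<Rightarrow> real"
    and a :: "nat \<Rightarrow> real"
    and b :: "real ^ 'm"
  assumes "prob_space M"
    and "coherent_utility M u"
    and "law_invariant M u"
    and "finite_on_gaussians M u"
    and "F \<in> borel_measurable M"
    and "\<And>m. (\<lambda>\<omega>. F \<omega> $ m) \<in> L1w M u"
    and "\<And>c. c \<noteq> 0 \<Longrightarrow> u (\<lambda>\<omega>. c \<bullet> F \<omega>) < 0"
    and "\<And>n k. k \<in> {1..n} \<Longrightarrow> gaussian M (\<xi> n k) 0 ((\<sigma> n k)\<^sup>2)"
    and "\<And>n. prob_space.indep_sets M
                (\<lambda>i. case i of None \<Rightarrow> sets (vimage_algebra (space M) F borel)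
                         | Some k \<Rightarrow> sets (vimage_algebra (space M) (\<xi> n k) borel))
                (insert None (Some ` {1..n}))"
    and "filterlim a at_top sequentially"
    and "b \<noteq> 0"
    and "\<And>m. (\<lambda>n. (\<Sum>k=1..n. B n k $ m) / a n) \<longlonglongrightarrow> b $ m"
    and "(\<lambda>n. (\<Sum>k=1..n. (\<sigma> n k)\<^sup>2) / (a n)\<^sup>2) \<longlonglongrightarrow> 0"
  shows "(\<lambda>n. factor_utility M u F (\<lambda>\<omega>. \<Sum>k=1..n. B n k \<bullet> F \<omega> + \<xi> n k \<omega>)
              / u (\<lambda>\<omega>. \<Sum>k=1..n. B n k \<bullet> F \<omega> + \<xi> n k \<omega>))
           \<longlonglongrightarrow> (1::ereal)"
proof -
  interpret prob_space M by fact
  define c where "c n = (\<Sum>k=1..n. B n k)" for n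
  define v where "v n = (\<Sum>k=1..n. (\<sigma> n k)\<^sup>2)" for n
  have sum_eq: "(\<lambda>\<omega>. \<Sum>k=1..n. B n k \<bullet> F \<omega> + \<xi> n k \<omega>)
      = (\<lambda>\<omega>. c n \<bullet> F \<omega> + (\<Sum>k=1..n. \<xi> n k \<omega>))" for n
    by (simp add: c_def sum.distrib inner_sum_left)
  have \<xi>m: "\<xi> n k \<in> borel_measurable M" if "k \<in> {1..n}" for n k
    using assms(8)[OF that] by (simp add: gaussian_def)
  have cF: "(\<lambda>\<omega>. c \<bullet> F \<omega>) \<in> borel_measurable (vimage_algebra (space M) F borel)" for c
    by (intro borel_measurable_inner borel_measurable_const measurable_vimage_algebra1) simp
  have factor: "factor_utility M u F (\<lambda>\<omega>. c n \<bullet> F \<omega> + (\<Sum>k=1..n. \<xi> n k \<omega>))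
      = u (\<lambda>\<omega>. c n \<bullet> F \<omega>)" for n
    using factor_utility_add_independent[OF assms(2,5) cF integrable_inner_L1w[OF assms(6)]
        finite_atLeastAtMost assms(9) \<xi>m integrable_gaussian[OF assms(8)] expectation_gaussian[OF assms(8)]] .
  have noise: "gaussian M (\<lambda>\<omega>. \<Sum>k=1..n. \<xi> n k \<omega>) 0 (v n)" for n
    using gaussian_sum[OF _ indep_vars_of_factor_family[OF assms(9) \<xi>m] assms(8)] unfolding v_def by simp
  obtain K where K: "\<And>\<eta> v Z. gaussian M \<eta> 0 v \<Longrightarrow> Z \<in> determining_set M u \<Longrightarrow>
      integrable M (\<lambda>\<omega>. Z \<omega> * \<eta> \<omega>) \<and> \<bar>\<integral>\<omega>. Z \<omega> * \<eta> \<omega> \<partial>M\<bar> \<le> K * sqrt v"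
    using gaussian_integral_bound[OF assms(3,4)] by blast
  have pos: "\<forall>\<^sub>F n in sequentially. 0 < a n"
    using assms(10) by (simp add: filterlim_at_top_dense)
  show ?thesis
    unfolding sum_eq factor
  proof (rule utility_ratio_tendsto_one[OF assms(2,5,6) assms(7)[OF assms(11)] _ pos,
        where N = "\<lambda>n \<omega>. \<Sum>k=1..n. \<xi> n k \<omega>" and \<delta> = "\<lambda>n. K * sqrt (v n)"])
    show "(\<lambda>n. c n /\<^sub>R a n) \<longlonglongrightarrow> b"
      using assms(12) by (intro vec_tendstoI) (simp add: c_def divide_inverse_commute)
    show "(\<lambda>\<omega>. \<Sum>k=1..n. \<xi> n k \<omega>) \<in> borel_measurable M" for n
      using noise[of n] by (simp add: gaussian_def)
    show "(\<lambda>n. K * sqrt (v n) / a n) \<longlonglongrightarrow> 0"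
      using tendsto_mult_right_zero[OF tendsto_sqrt_divide_zero[OF assms(13)[folded v_def] pos], of K]
      by simp
  qed (rule K[OF noise])
qed

end
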